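(* Let $B\subset\Delta^{re}_+$ and let $\preceq$ be a total order on $B$ satisfying condition CO(ii): whenever $\beta\in B$, $\gamma\in\Delta_+\setminus B$ and $\beta+\gamma\in B$, then $\beta\prec\beta+\gamma$. Then: (1) If $m\delta+\varepsilon$ and $(m+k)\delta+\varepsilon$ both lie in $B$, where $m\in\mathbb Z_{\ge0}$, $k\in\mathbb N$ and $\varepsilon\in\mathring\Delta$, then $m\delta+\varepsilon\prec(m+k)\delta+\varepsilon$. (2) $\preceq$ is a well-order on $B$. (3) If $B=\langle P\rangle$ for some $P\subset\mathring\Delta$, then $B$ has no maximum element with respect to $\preceq$.
   Context: Let $\Delta$ be the root system of an untwisted affine Lie algebra, with null root $\delta$. Let $\mathring\Delta$ be the finite (classical) root system of the underlying finite-dimensional simple Lie algebra. Let $\mathring\Delta_+$ be its positive roots and $\mathring\Delta_-=-\mathring\Delta_+$. Write $\mathbb N=\{1,2,\dots\}$. The positive roots are $\Delta_+=\Delta^{re}_+\amalg\Delta^{im}_+$, where $\Delta^{im}_+=\{n\delta:n\in\mathbb N\}$ and $\Delta^{re}_+=\{m\delta+\varepsilon: m\in\mathbb Z_{\geq 0},\varepsilon\in\mathring\Delta_+\}\cup\{m\delta+\varepsilon: m\in\mathbb N,\varepsilon\in\mathring\Delta_-\}$. For $\varepsilon\in\mathring\Delta$, put $\langle\varepsilon\rangle=\{m\delta+\varepsilon: m\in\mathbb Z_{\ge0}\}\cap\Delta_+$. For $P\subset\mathring\Delta$, put $\langle P\rangle=\bigcup_{\varepsilon\in P}\langle\varepsilon\rangle$.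 *)

theory Defs
  imports "HOL-Analysis.Analysis"
begin

definition root_system :: "'a::euclidean_space set \<Rightarrow> bool" where
  "root_system R \<longleftrightarrow>
     finite R \<and> 0 \<notin> R \<and> span R = UNIV \<and>
     (\<forall>\<alpha>\<in>R. \<forall>\<beta>\<in>R. \<beta> - (2 * (\<beta> \<bullet> \<alpha>) / (\<alpha> \<bullet> \<alpha>)) *\<^sub>R \<alpha> \<in> R) \<and>
     (\<forall>\<alpha>\<in>R. \<forall>\<beta>\<in>R. 2 * (\<beta> \<bullet> \<alpha>) / (\<alpha> \<bullet> \<alpha>) \<in> \<int>) \<and>
     (\<forall>\<alpha>\<in>R. \<forall>c::real. c *\<^sub>R \<alpha> \<in> R \<longrightarrow> c = 1 \<or> c = -1) \<and>
     \<not> (\<exists>R1 R2. R1 \<noteq> {} \<and> R2 \<noteq> {} \<and> R1 \<union> R2 = R \<and>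
           (\<forall>a\<in>R1. \<forall>b\<in>R2. a \<bullet> b = 0))"

text \<open>A positive system is determined by a regular element rho (no root orthogonal to rho).\<close>
definition regular :: "'a::euclidean_space set \<Rightarrow> 'a \<Rightarrow> bool" where
  "regular R \<rho> \<longleftrightarrow> (\<forall>\<alpha>\<in>R. \<alpha> \<bullet> \<rho> \<noteq> 0)"

definition fin_pos :: "'a::euclidean_space set \<Rightarrow> 'a \<Rightarrow> 'a set" where
  "fin_pos R \<rho> = {\<alpha>\<in>R. \<alpha> \<bullet> \<rho> > 0}"

definition fin_neg :: "'a::euclidean_space set \<Rightarrow> 'a \<Rightarrow> 'a set" where
  "fin_neg R \<rho> = uminus ` fin_pos R \<rho>"

text \<open>An element m\<delta>+\<epsilon> of the affine root lattice is encoded as the pair (\<epsilon>, m).\<close>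
definition aff_add :: "'a::euclidean_space \<times> int \<Rightarrow> 'a \<times> int \<Rightarrow> 'a \<times> int" where
  "aff_add x y = (fst x + fst y, snd x + snd y)"

definition re_pos :: "'a::euclidean_space set \<Rightarrow> 'a \<Rightarrow> ('a \<times> int) set" where
  "re_pos R \<rho> = {(\<epsilon>, m) | \<epsilon> m. (m \<ge> 0 \<and> \<epsilon> \<in> fin_pos R \<rho>) \<or> (m \<ge> 1 \<and> \<epsilon> \<in> fin_neg R \<rho>)}"

definition im_pos :: "('a::euclidean_space \<times> int) set" where
  "im_pos = {(0, n) | n. n \<ge> 1}"

definition aff_pos :: "'a::euclidean_space set \<Rightarrow> 'a \<Rightarrow> ('a \<times> int) set" where
  "aff_pos R \<rho> = re_pos R \<rho> \<union> im_pos"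

definition angle :: "'a::euclidean_space set \<Rightarrow> 'a \<Rightarrow> 'a \<Rightarrow> ('a \<times> int) set" where
  "angle R \<rho> \<epsilon> = {(\<epsilon>, m) | m. m \<ge> 0} \<inter> aff_pos R \<rho>"

definition angle_set :: "'a::euclidean_space set \<Rightarrow> 'a \<Rightarrow> 'a set \<Rightarrow> ('a \<times> int) set" where
  "angle_set R \<rho> P = (\<Union>\<epsilon>\<in>P. angle R \<rho> \<epsilon>)"

end

theory Submission
  imports Defs
begin

text \<open>Adding the imaginary root k\<delta>, which never lies in B, to m\<delta>+\<epsilon> gives (m+k)\<delta>+\<epsilon>; so CO(ii)
  makes every string B \<inter> (\<epsilon> + \<int>\<delta>) increasing in m. As B has only finitely many such strings
  and each is a copy of a subset of \<nat>, the linear order on B is a well-order. If B = \<langle>P\<rangle>, every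
  string is infinite, so B has no largest element.\<close>

lemma least_element_finite_Union:
  assumes lin: "linear_order_on B r" and "finite F" and "\<Union>F \<subseteq> B"
    and least: "\<And>C A. C \<in> F \<Longrightarrow> A \<subseteq> C \<Longrightarrow> A \<noteq> {} \<Longrightarrow> \<exists>a\<in>A. \<forall>a'\<in>A. (a, a') \<in> r"
    and "A \<subseteq> \<Union>F" and "A \<noteq> {}"
  shows "\<exists>a\<in>A. \<forall>a'\<in>A. (a, a') \<in> r"
  using \<open>finite F\<close> assms(3-)
proof (induction F arbitrary: A rule: finite_induct)
  case empty
  then show ?case by simp
next
  case (insert C F)
  have least_C: "\<exists>a\<in>A'. \<forall>a'\<in>A'. (a, a') \<in> r" if "A' \<subseteq> C" "A' \<noteq> {}" for A'
    using insert.prems(2)[of C A'] that by simp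
  show ?case
  proof (cases "A \<subseteq> C")
    case True
    then show ?thesis using least_C \<open>A \<noteq> {}\<close> by simp
  next
    case False
    have "\<exists>a\<in>A - C. \<forall>a'\<in>A - C. (a, a') \<in> r"
    proof (rule insert.IH)
      show "\<Union>F \<subseteq> B" using insert.prems(1) by simp
      show "\<exists>a\<in>A'. \<forall>a'\<in>A'. (a, a') \<in> r" if "C' \<in> F" "A' \<subseteq> C'" "A' \<noteq> {}" for C' A'
        using insert.prems(2)[of C' A'] that by simp
      show "A - C \<subseteq> \<Union>F" using insert.prems(3) by auto
      show "A - C \<noteq> {}" using False by simp
    qed
    then obtain a2 where a2: "a2 \<in> A - C" "\<forall>a'\<in>A - C. (a2, a') \<in> r" by blast
    show ?thesis
    proof (cases "A \<inter> C = {}")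
      case True
      then show ?thesis using a2 by auto
    next
      case False
      then obtain a1 where a1: "a1 \<in> A \<inter> C" "\<forall>a'\<in>A \<inter> C. (a1, a') \<in> r"
        using least_C[of "A \<inter> C"] by auto
      have "a1 \<in> B" "a2 \<in> B" using a1(1) a2(1) insert.prems(1,3) by auto
      then have "(a1, a2) \<in> r \<or> (a2, a1) \<in> r"
        using lin unfolding order_on_defs total_on_def refl_on_def by metis
      moreover have "trans r" using lin unfolding order_on_defs by simp
      ultimately show ?thesis using a1 a2 unfolding trans_def by blast
    qed
  qed
qed

lemma well_order_on_finite_Union:
  assumes lin: "linear_order_on B r" and "finite F" and "B = \<Union>F"
    and "\<And>C A. C \<in> F \<Longrightarrow> A \<subseteq> C \<Longrightarrow> A \<noteq> {} \<Longrightarrow> \<exists>a\<in>A. \<forall>a'\<in>A. (a, a') \<in> r"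
  shows "well_order_on B r"
proof -
  have Field: "Field r = B"
    using lin unfolding order_on_defs refl_on_def Field_def by blast
  have "\<exists>a\<in>A. \<forall>a'\<in>A. (a, a') \<in> r" if "A \<subseteq> B" "A \<noteq> {}" for A
    using least_element_finite_Union[OF lin] assms(2-) that by blast
  then have "wf (r - Id)"
    using lin Field Linear_order_wf_diff_Id[of r] by simp
  then show ?thesis using lin unfolding well_order_on_def by blast
qed

lemma imaginary_root_notin_re_pos:
  assumes "0 \<notin> R"
  shows "(0, k) \<notin> re_pos R \<rho>"
  using assms unfolding re_pos_def fin_pos_def fin_neg_def by auto

lemma imaginary_root_in_aff_pos:
  assumes "k \<ge> 1"
  shows "(0, k) \<in> aff_pos R \<rho>"
  using assms unfolding aff_pos_def im_pos_def by auto

lemma finite_fst_re_pos: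
  assumes "finite R"
  shows "finite (fst ` re_pos R \<rho>)"
proof (rule finite_subset)
  show "fst ` re_pos R \<rho> \<subseteq> R \<union> uminus ` R"
    unfolding re_pos_def fin_pos_def fin_neg_def by auto
  show "finite (R \<union> uminus ` R)" using assms by simp
qed

lemma re_pos_shift:
  assumes "(\<epsilon>, m) \<in> re_pos R \<rho>" and "k \<ge> 0"
  shows "(\<epsilon>, m + k) \<in> re_pos R \<rho>"
  using assms unfolding re_pos_def by auto

locale co_order =
  fixes R :: "'a::euclidean_space set" and \<rho> :: 'a
    and B :: "('a \<times> int) set" and r :: "(('a \<times> int) \<times> ('a \<times> int)) set"
  assumes finite_R: "finite R" and zero_notin_R: "0 \<notin> R"
    and B_sub: "B \<subseteq> re_pos R \<rho>"
    and lin: "linear_order_on B r"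
    and CO2: "\<And>\<beta> \<gamma>. \<beta> \<in> B \<Longrightarrow> \<gamma> \<in> aff_pos R \<rho> - B \<Longrightarrow> aff_add \<beta> \<gamma> \<in> B \<Longrightarrow>
                (\<beta>, aff_add \<beta> \<gamma>) \<in> r \<and> \<beta> \<noteq> aff_add \<beta> \<gamma>"
begin

lemma string_increasing:
  assumes "k \<ge> 1" and "(\<epsilon>, m) \<in> B" and "(\<epsilon>, m + k) \<in> B"
  shows "((\<epsilon>, m), (\<epsilon>, m + k)) \<in> r"
proof -
  have "(0, k) \<in> aff_pos R \<rho> - B"
    using imaginary_root_in_aff_pos[OF \<open>k \<ge> 1\<close>] imaginary_root_notin_re_pos[OF zero_notin_R] B_sub
    by blast
  moreover have "aff_add (\<epsilon>, m) (0, k) = (\<epsilon>, m + k)" unfolding aff_add_def by simp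
  ultimately show ?thesis using CO2[of "(\<epsilon>, m)" "(0, k)"] assms(2,3) by simp
qed

lemma string_mono:
  assumes "m \<le> m'" and "(\<epsilon>, m) \<in> B" and "(\<epsilon>, m') \<in> B"
  shows "((\<epsilon>, m), (\<epsilon>, m')) \<in> r"
proof (cases "m = m'")
  case True
  then show ?thesis using lin assms(2) unfolding order_on_defs refl_on_def by blast
next
  case False
  then show ?thesis using string_increasing[of "m' - m" \<epsilon> m] assms by simp
qed

lemma string_least_element:
  assumes A: "A \<subseteq> B \<inter> {\<epsilon>} \<times> UNIV" and "A \<noteq> {}"
  shows "\<exists>a\<in>A. \<forall>a'\<in>A. (a, a') \<in> r"
proof -
  have A_string: "(\<epsilon>, snd a) = a \<and> a \<in> B \<and> snd a \<ge> 0" if "a \<in> A" for a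
    using that A B_sub unfolding re_pos_def by auto
  obtain a where a: "a \<in> A" "\<forall>a'\<in>A. nat (snd a) \<le> nat (snd a')"
    using ex_has_least_nat[of "\<lambda>a. a \<in> A" _ "\<lambda>a. nat (snd a)"] \<open>A \<noteq> {}\<close> by blast
  have "(a, a') \<in> r" if "a' \<in> A" for a'
  proof -
    have "nat (snd a) \<le> nat (snd a')" using a(2) that by blast
    then have "snd a \<le> snd a'" using A_string[OF that] by (simp add: nat_le_eq_zle)
    then show ?thesis
      using string_mono[of "snd a" "snd a'" \<epsilon>] A_string[OF a(1)] A_string[OF that] by simp
  qed
  then show ?thesis using a(1) by blast
qed

lemma well_order: "well_order_on B r"
proof (rule well_order_on_finite_Union[OF lin])
  let ?strings = "(\<lambda>\<epsilon>. B \<inter> {\<epsilon>} \<times> UNIV) ` fst ` B"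
  show "finite ?strings"
    using finite_fst_re_pos[OF finite_R] B_sub by (meson finite_imageI finite_subset image_mono)
  show "B = \<Union>?strings" by force
  show "\<exists>a\<in>A. \<forall>a'\<in>A. (a, a') \<in> r" if "C \<in> ?strings" "A \<subseteq> C" "A \<noteq> {}" for C A
    using that string_least_element by blast
qed

lemma angle_set_no_greatest:
  assumes B_angle: "B = angle_set R \<rho> P"
  shows "\<not> (\<exists>\<beta>\<in>B. \<forall>\<gamma>\<in>B. (\<gamma>, \<beta>) \<in> r)"
proof
  assume "\<exists>\<beta>\<in>B. \<forall>\<gamma>\<in>B. (\<gamma>, \<beta>) \<in> r"
  then obtain \<epsilon> m where \<beta>: "(\<epsilon>, m) \<in> B" and greatest: "\<forall>\<gamma>\<in>B. (\<gamma>, (\<epsilon>, m)) \<in> r"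
    by auto
  have "(\<epsilon>, m) \<in> angle_set R \<rho> P" using \<beta> B_angle by simp
  then have "\<epsilon> \<in> P" and "m \<ge> 0" unfolding angle_set_def angle_def by auto
  have "(\<epsilon>, m + 1) \<in> re_pos R \<rho>" using re_pos_shift[of \<epsilon> m R \<rho> 1] \<beta> B_sub by auto
  then have "(\<epsilon>, m + 1) \<in> angle R \<rho> \<epsilon>"
    using \<open>m \<ge> 0\<close> unfolding angle_def aff_pos_def by simp
  then have next_in_B: "(\<epsilon>, m + 1) \<in> B"
    using \<open>\<epsilon> \<in> P\<close> B_angle unfolding angle_set_def by blast
  have "((\<epsilon>, m), (\<epsilon>, m + 1)) \<in> r" using string_increasing[of 1 \<epsilon> m] \<beta> next_in_B by simp
  moreover have "((\<epsilon>, m + 1), (\<epsilon>, m)) \<in> r" using greatest next_in_B by blast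
  moreover have "antisym r" using lin unfolding order_on_defs by blast
  ultimately show False using antisymD by fastforce
qed

end

theorem lemma7p4:
  fixes R :: "'a::euclidean_space set" and \<rho> :: 'a
    and B :: "('a \<times> int) set" and r :: "(('a \<times> int) \<times> ('a \<times> int)) set"
  assumes rs: "root_system R" and reg: "regular R \<rho>"
    and B_sub: "B \<subseteq> re_pos R \<rho>"
    and lin: "linear_order_on B r"
    and CO2: "\<And>\<beta> \<gamma>. \<beta> \<in> B \<Longrightarrow> \<gamma> \<in> aff_pos R \<rho> - B \<Longrightarrow> aff_add \<beta> \<gamma> \<in> B \<Longrightarrow>
                (\<beta>, aff_add \<beta> \<gamma>) \<in> r \<and> \<beta> \<noteq> aff_add \<beta> \<gamma>"
  shows "(\<forall>\<epsilon> m k. \<epsilon> \<in> R \<and> m \<ge> 0 \<and> k \<ge> 1 \<and> (\<epsilon>, m) \<in> B \<and> (\<epsilon>, m + k) \<in> B \<longrightarrow>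
            ((\<epsilon>, m), (\<epsilon>, m + k)) \<in> r \<and> (\<epsilon>, m) \<noteq> (\<epsilon>, m + k))
       \<and> well_order_on B r
       \<and> (\<forall>P. P \<subseteq> R \<and> B = angle_set R \<rho> P \<longrightarrow> \<not> (\<exists>\<beta>\<in>B. \<forall>\<gamma>\<in>B. (\<gamma>, \<beta>) \<in> r))"
proof -
  have "finite R" "0 \<notin> R" using rs unfolding root_system_def by blast+
  then interpret co_order R \<rho> B r using B_sub lin CO2 by unfold_locales
  show ?thesis using string_increasing well_order angle_set_no_greatest by auto
qed

end
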